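(* Under Algorithm 2(b) below (drop when seen, with field size $q\ge n$), at the end of every slot the sender's physical queue size is at most the sum over the $n$ receivers of their virtual queue sizes (the degrees-of-freedom backlogs between the sender and each receiver). Consequently, if $\lambda<\mu$, the expected size of the physical queue in steady state is $O\left(\frac{1}{1-\rho}\right)$ as $\rho=\lambda/\mu\to1^-$ (with $\lambda,\mu\in(0,1)$ and one of them held fixed).
   Context: Model: a sender broadcasts a stream of packets to $n$ receivers. Packets are fixed-length vectors over $\mathbb{F}_q$; the $k$-th arriving packet is $\mathbf{p}_k$. Time is slotted; in each slot one packet arrives with probability $\lambda$ independently (just after the slot begins). The sender transmits at most one linear combination of packets in its queue per slot (coefficients in the header). Each receiver independently receives it with probability $\mu$, else a detectable erasure; independent across receivers and slots. Perfect feedback reaches the sender before the end of the slot; drops happen just before the end of the slot; queue sizes are measured at the end of the slot; $\rho=\lambda/\mu$. A node's knowledge space is the space of coefficient vectors (w.r.t. arrived packets) of linear combinations it can compute; the sender's is $\mathbb{F}_q^{A}$ after $A$ arrivals. The virtual queue size of receiver $j$ is $\dim$(sender's knowledge space) $-\dim$(receiver $j$'s knowledge space). A node has seen $\mathbf{p}_k$ if it can compute $\mathbf{p}_k+\mathbf{q}$ with $\mathbf{q}$ a linear combination of packets of index greater than $k$. If receiver $r$ has seen $\mathbf{p}_k$, its witness $\mathbf{W}_r(\mathbf{p}_k)$ is the unique linear combination it knows of the form $\mathbf{p}_k+\mathbf{q}$ where $\mathbf{q}$ involves only packets of index greater than $k$ that $r$ has not seen. A receiver's next unseen packet is the lowest-index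 packet it has not seen. Algorithm 2(b): Queue rule: at the end of each slot, drop from the queue every packet that all $n$ receivers have seen. Coding module: let $u_1<\dots<u_m$ be the distinct indices of the next unseen packets of those receivers whose next unseen packet has arrived at the sender, and $R(u_i)$ the set of such receivers whose next unseen packet is $\mathbf{p}_{u_i}$. For $j=1,\dots,m$: for each $r\in R(u_j)$ let $\mathbf{y}_r=\sum_{i<j}\alpha_i\mathbf{W}_r(\mathbf{p}_{u_i})$, and choose $\alpha_j\in\mathbb{F}_q$ different from the coefficient of $\mathbf{p}_{u_j}$ in $\mathbf{y}_r$ for every $r\in R(u_j)$. Transmit $\mathbf{g}=\sum_{i=1}^m\alpha_i\mathbf{p}_{u_i}$ (nothing if the queue is empty). *)

theory Defs
  imports "HOL-Probability.Probability" "HOL-Library.Function_Algebras"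
begin

text \<open>Packets are indexed 0,1,2,... in order of arrival (packet k is the (k+1)-st
arrival).  A linear combination of packets is represented by its coefficient
vector, a function nat => 'f (coefficient of packet i at position i).
The field F_q is a finite field type 'f, so q = CARD('f).
Receivers form a finite type 'r, so n = CARD('r).\<close>

type_synonym 'f cvec = "nat \<Rightarrow> 'f"

definition cscale :: "'f::field \<Rightarrow> 'f cvec \<Rightarrow> 'f cvec" where
  "cscale c v = (\<lambda>i. c * v i)"

definition cspan :: "'f::field cvec set \<Rightarrow> 'f cvec set" where
  "cspan S = module.span cscale S"

definition cdim :: "'f::field cvec set \<Rightarrow> nat" where
  "cdim V = vector_space.dim cscale V"

definition sender_space :: "nat \<Rightarrow> 'f::field cvec set" where
  "sender_space A = {v. \<forall>i\<ge>A. v i = 0}"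

text \<open>A node with knowledge space V has seen packet k iff it can compute
p_k + q with q a combination of packets of index > k.\<close>
definition seen :: "'f::field cvec set \<Rightarrow> nat \<Rightarrow> bool" where
  "seen V k \<longleftrightarrow> (\<exists>v\<in>V. v k = 1 \<and> (\<forall>i<k. v i = 0))"

text \<open>Witness of packet k: the unique known combination p_k + q with q involving only
packets of index > k that are not seen.\<close>
definition witness :: "'f::field cvec set \<Rightarrow> nat \<Rightarrow> 'f cvec" where
  "witness V k = (THE w. w \<in> V \<and> w k = 1 \<and> (\<forall>i<k. w i = 0) \<and>
                        (\<forall>i>k. w i \<noteq> 0 \<longrightarrow> \<not> seen V i))"

definition next_unseen :: "'f::field cvec set \<Rightarrow> nat" where
  "next_unseen V = (LEAST k. \<not> seen V k)"

text \<open>Given the number A of packets that have arrived at the sender (including any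
arrival in the current slot) and the receivers' knowledge spaces K at the start of
the slot, g is a transmission allowed by the coding module of Algorithm 2(b).
U is the set of the indices u_1 < ... < u_m; R u is R(u); the coefficient alpha u
plays the role of alpha_j for u = u_j.  The coefficient of p_(u_j) in
y_r = sum_(i<j) alpha_i W_r(p_(u_i)) is the sum below.  If the queue is empty then
U is empty and g = 0, i.e. nothing (useful) is sent.\<close>
definition active_rcv :: "nat \<Rightarrow> ('r \<Rightarrow> 'f::field cvec set) \<Rightarrow> 'r set" where
  "active_rcv A K = {r. next_unseen (K r) < A}"

definition U_idx :: "nat \<Rightarrow> ('r \<Rightarrow> 'f::field cvec set) \<Rightarrow> nat set" where
  "U_idx A K = (\<lambda>r. next_unseen (K r)) ` active_rcv A K"

definition R_set :: "nat \<Rightarrow> ('r \<Rightarrow> 'f::field cvec set) \<Rightarrow> nat \<Rightarrow> 'r set" where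
  "R_set A K u = {r \<in> active_rcv A K. next_unseen (K r) = u}"

definition valid_tx :: "nat \<Rightarrow> ('r \<Rightarrow> 'f::field cvec set) \<Rightarrow> 'f cvec \<Rightarrow> bool" where
  "valid_tx A K g \<longleftrightarrow>
     (\<exists>\<alpha>::nat \<Rightarrow> 'f.
        (\<forall>u\<in>U_idx A K. \<forall>r\<in>R_set A K u.
            \<alpha> u \<noteq> (\<Sum>u'\<in>{u'\<in>U_idx A K. u' < u}. \<alpha> u' * witness (K r) u' u)) \<and>
        g = (\<lambda>i. if i \<in> U_idx A K then \<alpha> i else 0))"

text \<open>Slots are numbered 0,1,2,...; a t: a packet arrives in slot t;
e t r: receiver r receives the transmission of slot t; g t: coefficient vector
transmitted in slot t.  Quantities indexed by t below are "after t slots", i.e.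
at the end of slot t-1 (t = 0: initial state).\<close>

definition arr :: "(nat \<Rightarrow> bool) \<Rightarrow> nat \<Rightarrow> nat" where
  "arr a t = card {s. s < t \<and> a s}"

definition know :: "(nat \<Rightarrow> 'r \<Rightarrow> bool) \<Rightarrow> (nat \<Rightarrow> 'f::field cvec) \<Rightarrow> nat \<Rightarrow> 'r \<Rightarrow> 'f cvec set" where
  "know e g t r = cspan {g s | s. s < t \<and> e s r}"

text \<open>The transmission of slot t is chosen by the coding module from the arrivals
up to and including slot t and the receivers' knowledge at the start of slot t.\<close>
definition valid_run :: "(nat \<Rightarrow> bool) \<Rightarrow> (nat \<Rightarrow> 'r \<Rightarrow> bool) \<Rightarrow> (nat \<Rightarrow> 'f::field cvec) \<Rightarrow> bool" where
  "valid_run a e g \<longleftrightarrow> (\<forall>t. valid_tx (arr a (Suc t)) (know e g t) (g t))"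

fun queue :: "(nat \<Rightarrow> bool) \<Rightarrow> (nat \<Rightarrow> 'r \<Rightarrow> bool) \<Rightarrow> (nat \<Rightarrow> 'f::field cvec) \<Rightarrow> nat \<Rightarrow> nat set" where
  "queue a e g 0 = {}"
| "queue a e g (Suc t) =
     (queue a e g t \<union> {arr a t..<arr a (Suc t)}) - {k. \<forall>r. seen (know e g (Suc t) r) k}"

definition virtual_queue :: "(nat \<Rightarrow> bool) \<Rightarrow> (nat \<Rightarrow> 'r \<Rightarrow> bool) \<Rightarrow> (nat \<Rightarrow> 'f::field cvec) \<Rightarrow> nat \<Rightarrow> 'r \<Rightarrow> nat" where
  "virtual_queue a e g t r = cdim (sender_space (arr a t) :: 'f cvec set) - cdim (know e g t r)"

text \<open>Outcome of one slot: (arrival?, set of receivers that receive).\<close>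
definition slot_pmf :: "real \<Rightarrow> real \<Rightarrow> (bool \<times> ('r::finite \<Rightarrow> bool)) pmf" where
  "slot_pmf lam mu = pair_pmf (bernoulli_pmf lam) (Pi_pmf UNIV False (\<lambda>_. bernoulli_pmf mu))"

definition path_measure :: "real \<Rightarrow> real \<Rightarrow> (nat \<Rightarrow> bool \<times> ('r::finite \<Rightarrow> bool)) measure" where
  "path_measure lam mu = PiM UNIV (\<lambda>_::nat. measure_pmf (slot_pmf lam mu))"

definition arrivals_of :: "(nat \<Rightarrow> bool \<times> ('r \<Rightarrow> bool)) \<Rightarrow> nat \<Rightarrow> bool" where
  "arrivals_of \<omega> t = fst (\<omega> t)"

definition receptions_of :: "(nat \<Rightarrow> bool \<times> ('r \<Rightarrow> bool)) \<Rightarrow> nat \<Rightarrow> 'r \<Rightarrow> bool" where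
  "receptions_of \<omega> t r = snd (\<omega> t) r"

text \<open>A (deterministic, causal) implementation of Algorithm 2(b): for every sample
path it produces a valid run, and the transmission of slot t depends only on the
arrivals up to slot t and on the receptions before slot t.\<close>
definition alg2b_policy :: "((nat \<Rightarrow> bool \<times> ('r \<Rightarrow> bool)) \<Rightarrow> nat \<Rightarrow> 'f::field cvec) \<Rightarrow> bool" where
  "alg2b_policy tx \<longleftrightarrow>
     (\<forall>\<omega>. valid_run (arrivals_of \<omega>) (receptions_of \<omega>) (tx \<omega>)) \<and>
     (\<forall>\<omega> \<omega>' t. (\<forall>s<t. \<omega> s = \<omega>' s) \<and> fst (\<omega> t) = fst (\<omega>' t) \<longrightarrow> tx \<omega> t = tx \<omega>' t)"

definition exp_queue :: "real \<Rightarrow> real \<Rightarrow> ((nat \<Rightarrow> bool \<times> ('r::finite \<Rightarrow> bool)) \<Rightarrow> nat \<Rightarrow> 'f::field cvec) \<Rightarrow> nat \<Rightarrow> real" where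
  "exp_queue lam mu tx t =
     integral\<^sup>L (path_measure lam mu)
       (\<lambda>\<omega>. real (card (queue (arrivals_of \<omega>) (receptions_of \<omega>) (tx \<omega>) t)))"

end

theory Submission
  imports Defs
begin

text \<open>A packet stays in the physical queue only while some receiver has not seen it, so the
  queue size is at most the number of pairs (receiver, arrived packet it has not seen). A
  receiver's knowledge space is spanned by its witnesses, one per seen packet, so its dimension
  is at most the number of seen packets and the unseen count is at most the virtual queue.

  For the expectation, the coefficients of Algorithm 2(b) make every reception innovative: a
  receiver that gets the transmission sees its next unseen packet. Hence each receiver's unseen
  count is dominated by a discrete-time queue with Bernoulli(\<lambda>) arrivals and Bernoulli(\<mu>)
  services, whose mean stays below \<lambda>(1 - \<mu>)/(\<mu> - \<lambda>) \<le> 1/(1 - \<rho>) at all times.\<close>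

lemma sum_fun_apply: "(\<Sum>i\<in>S. f i) x = (\<Sum>i\<in>S. f i x)"
  by (induction S rule: infinite_finite_induct) auto

interpretation cv: vector_space "cscale :: 'f::field \<Rightarrow> 'f cvec \<Rightarrow> 'f cvec"
  by unfold_locales (auto simp: cscale_def fun_eq_iff algebra_simps)

lemma cscale_apply [simp]: "cscale c v i = c * v i"
  by (simp add: cscale_def)

lemma subspace_sender_space: "cv.subspace (sender_space N :: 'f::field cvec set)"
  unfolding cv.subspace_def sender_space_def by auto

definition unit_cvec :: "nat \<Rightarrow> 'f::field cvec" where
  "unit_cvec i = (\<lambda>j. if j = i then 1 else 0)"

lemma sender_space_eq_span_units:
  "sender_space N = cv.span (unit_cvec ` {..<N} :: 'f::field cvec set)"
proof
  show "sender_space N \<subseteq> cv.span (unit_cvec ` {..<N} :: 'f cvec set)"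
  proof
    fix v :: "'f cvec" assume v: "v \<in> sender_space N"
    have "v = (\<Sum>i<N. cscale (v i) (unit_cvec i))"
      using v by (auto simp: fun_eq_iff sum_fun_apply unit_cvec_def sender_space_def
                             if_distrib[of "(*) _"] cong: if_cong)
    also have "\<dots> \<in> cv.span (unit_cvec ` {..<N})"
      by (intro cv.span_sum cv.span_scale cv.span_base) auto
    finally show "v \<in> cv.span (unit_cvec ` {..<N})" .
  qed
  show "cv.span (unit_cvec ` {..<N}) \<subseteq> sender_space N"
    by (rule cv.span_minimal[OF _ subspace_sender_space]) (auto simp: unit_cvec_def sender_space_def)
qed

lemma independent_units: "cv.independent (unit_cvec ` I :: 'f::field cvec set)"
  unfolding cv.dependent_def
proof clarsimp
  fix i assume "i \<in> I" and i: "unit_cvec i \<in> cv.span (unit_cvec ` I - {unit_cvec i} :: 'f cvec set)"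
  have "cv.span (unit_cvec ` I - {unit_cvec i}) \<subseteq> {v :: 'f cvec. v i = 0}"
    by (rule cv.span_minimal) (auto simp: cv.subspace_def unit_cvec_def)
  with i show False by (auto simp: unit_cvec_def)
qed

lemma dim_sender_space: "cv.dim (sender_space N :: 'f::field cvec set) = N"
proof -
  have "inj_on (unit_cvec :: nat \<Rightarrow> 'f cvec) {..<N}"
    by (auto simp: inj_on_def unit_cvec_def fun_eq_iff split: if_splits)
  then show ?thesis
    by (simp add: sender_space_eq_span_units cv.dim_eq_card_independent[OF independent_units] card_image)
qed

section \<open>Seen packets and witnesses\<close>

definition is_witness :: "'f::field cvec set \<Rightarrow> nat \<Rightarrow> 'f cvec \<Rightarrow> bool" where
  "is_witness V k w \<longleftrightarrow>
     w \<in> V \<and> w k = 1 \<and> (\<forall>i<k. w i = 0) \<and> (\<forall>i>k. w i \<noteq> 0 \<longrightarrow> \<not> seen V i)"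

lemma seen_imp_less:
  assumes "V \<subseteq> sender_space N" "seen V k"
  shows "k < N"
proof (rule ccontr)
  assume "\<not> k < N"
  obtain v where "v \<in> V" "v k = 1" using \<open>seen V k\<close> unfolding seen_def by blast
  with assms(1) \<open>\<not> k < N\<close> show False by (auto simp: sender_space_def)
qed

lemma seen_mono: "V \<subseteq> W \<Longrightarrow> seen V k \<Longrightarrow> seen W k"
  unfolding seen_def by blast

lemma seen_if_leading:
  assumes "cv.subspace V" "v \<in> V" "v k \<noteq> 0" "\<forall>i<k. v i = 0"
  shows "seen V k"
  unfolding seen_def using assms
  by (intro bexI[of _ "cscale (inverse (v k)) v"]) (auto intro: cv.subspace_scale)

lemma vanishing_on_seen_imp_zero:
  assumes V: "cv.subspace V" and "d \<in> V" and vanish: "\<And>j. seen V j \<Longrightarrow> d j = 0"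
  shows "d = 0"
proof (rule ccontr)
  assume "d \<noteq> 0"
  then obtain l where l: "d l \<noteq> 0" "\<forall>i<l. d i = 0"
    using exists_least_iff[of "\<lambda>i. d i \<noteq> 0"] by (auto simp: fun_eq_iff)
  then have "seen V l" using seen_if_leading[OF V \<open>d \<in> V\<close>] by blast
  with vanish l show False by blast
qed

lemma sum_witnesses_at_seen:
  assumes "finite S" and W: "\<And>i. i \<in> S \<Longrightarrow> is_witness V i (W i)" and "seen V j"
  shows "(\<Sum>i\<in>S. c i * W i j) = (if j \<in> S then c j else 0)"
proof -
  have "c i * W i j = (if i = j then c i else 0)" if "i \<in> S" for i
    using W[OF that] \<open>seen V j\<close> by (cases i j rule: linorder_cases) (auto simp: is_witness_def)
  then show ?thesis using \<open>finite S\<close> by (simp cong: sum.cong)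
qed

lemma is_witness_unique:
  assumes V: "cv.subspace V" and w1: "is_witness V k w1" and w2: "is_witness V k w2"
  shows "w1 = w2"
proof -
  have "w1 - w2 = 0"
  proof (rule vanishing_on_seen_imp_zero[OF V])
    show "w1 - w2 \<in> V" using w1 w2 V by (auto simp: is_witness_def intro: cv.subspace_diff)
    show "(w1 - w2) j = 0" if "seen V j" for j
      using w1 w2 that by (cases j k rule: linorder_cases) (auto simp: is_witness_def)
  qed
  then show ?thesis by simp
qed

lemma is_witness_exists:
  assumes V: "cv.subspace V" and VN: "V \<subseteq> sender_space N" and "seen V k"
  shows "\<exists>w. is_witness V k w"
  using \<open>seen V k\<close>
proof (induction "N - k" arbitrary: k rule: less_induct)
  case (less k)
  obtain v where v: "v \<in> V" "v k = 1" "\<forall>i<k. v i = 0"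
    using less.prems unfolding seen_def by blast
  define S where "S = {i. k < i \<and> seen V i}"
  have "finite S"
    by (rule finite_subset[of _ "{..<N}"]) (auto simp: S_def dest: seen_imp_less[OF VN])
  have "\<exists>w. is_witness V i w" if "i \<in> S" for i
  proof (rule less.hyps)
    show "seen V i" using that by (simp add: S_def)
    then have "i < N" by (rule seen_imp_less[OF VN])
    then show "N - i < N - k" using that by (auto simp: S_def)
  qed
  then obtain W where W: "\<And>i. i \<in> S \<Longrightarrow> is_witness V i (W i)" by metis
  \<comment> \<open>Gaussian elimination: clear the seen positions after k using their witnesses.\<close>
  define w where "w = v - (\<Sum>i\<in>S. cscale (v i) (W i))"
  have w_apply: "w j = v j - (\<Sum>i\<in>S. v i * W i j)" for j
    by (simp add: w_def sum_fun_apply)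
  have "w \<in> V"
    unfolding w_def using v W V
    by (intro cv.subspace_diff cv.subspace_sum cv.subspace_scale) (auto simp: is_witness_def)
  moreover have "w j = v j" if "j \<le> k" for j
    using W that by (simp add: w_apply is_witness_def S_def)
  moreover have "w j = 0" if "k < j" "seen V j" for j
    using that sum_witnesses_at_seen[OF \<open>finite S\<close> W \<open>seen V j\<close>, of v]
    by (simp add: w_apply S_def)
  ultimately have "is_witness V k w"
    using v by (auto simp: is_witness_def)
  then show ?case by blast
qed

lemma witness_is_witness:
  assumes "cv.subspace V" "V \<subseteq> sender_space N" "seen V k"
  shows "is_witness V k (witness V k)"
proof -
  have "\<exists>!w. is_witness V k w"
    using is_witness_exists[OF assms] is_witness_unique[OF assms(1)] by blast
  then show ?thesis unfolding witness_def is_witness_def[symmetric] by (rule theI')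
qed

lemma subset_span_witnesses:
  assumes V: "cv.subspace V" and VN: "V \<subseteq> sender_space N"
  shows "V \<subseteq> cv.span (witness V ` {k. seen V k})"
proof
  fix v assume "v \<in> V"
  let ?S = "{k. seen V k}"
  have "finite ?S" by (rule finite_subset[of _ "{..<N}"]) (auto dest: seen_imp_less[OF VN])
  have W: "is_witness V k (witness V k)" if "k \<in> ?S" for k
    using that witness_is_witness[OF V VN] by blast
  let ?u = "\<Sum>k\<in>?S. cscale (v k) (witness V k)"
  have "v - ?u = 0"
  proof (rule vanishing_on_seen_imp_zero[OF V])
    show "v - ?u \<in> V"
      using \<open>v \<in> V\<close> W V by (intro cv.subspace_diff cv.subspace_sum cv.subspace_scale) (auto simp: is_witness_def)
    show "(v - ?u) j = 0" if "seen V j" for j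
      using that sum_witnesses_at_seen[OF \<open>finite ?S\<close> W that, of v] by (simp add: sum_fun_apply)
  qed
  then have "v = ?u" by simp
  also have "?u \<in> cv.span (witness V ` ?S)"
    by (intro cv.span_sum cv.span_scale cv.span_base) auto
  finally show "v \<in> cv.span (witness V ` ?S)" .
qed

lemma dim_le_card_seen:
  assumes "cv.subspace V" "V \<subseteq> sender_space N"
  shows "cv.dim V \<le> card {k. seen V k}"
proof -
  have "finite {k. seen V k}"
    by (rule finite_subset[of _ "{..<N}"]) (auto dest: seen_imp_less[OF assms(2)])
  then have "cv.dim V \<le> card (witness V ` {k. seen V k})"
    by (intro cv.dim_le_card[OF subset_span_witnesses[OF assms]]) auto
  also have "\<dots> \<le> card {k. seen V k}" by (rule card_image_le) fact
  finally show ?thesis .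
qed

section \<open>The physical queue and the unseen packets\<close>

lemma arr_Suc: "arr a (Suc t) = arr a t + of_bool (a t)"
proof -
  have "{s. s < Suc t \<and> a s} = {s. s < t \<and> a s} \<union> (if a t then {t} else {})"
    by (auto simp: less_Suc_eq)
  then show ?thesis unfolding arr_def by (auto simp: card_insert_if)
qed

lemma arr_mono: "s \<le> t \<Longrightarrow> arr a s \<le> arr a t"
  unfolding arr_def by (intro card_mono) auto

lemma know_subspace: "cv.subspace (know e g t r)"
  unfolding know_def cspan_def by simp

lemma know_mono: "know e g t r \<subseteq> know e g (Suc t) r"
  unfolding know_def cspan_def by (intro cv.span_mono) auto

lemma transmission_in_know: "e t r \<Longrightarrow> g t \<in> know e g (Suc t) r"
  unfolding know_def cspan_def by (intro cv.span_base) auto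

lemma valid_tx_in_sender_space: "valid_tx A K g \<Longrightarrow> g \<in> sender_space A"
  unfolding valid_tx_def sender_space_def U_idx_def active_rcv_def by fastforce

lemma know_subset_sender_space:
  assumes "valid_run a e g"
  shows "know e g t r \<subseteq> sender_space (arr a t)"
  unfolding know_def cspan_def
proof (rule cv.span_minimal[OF _ subspace_sender_space], clarify)
  fix s assume "s < t"
  have "g s \<in> sender_space (arr a (Suc s))"
    using assms unfolding valid_run_def by (blast intro: valid_tx_in_sender_space)
  moreover have "arr a (Suc s) \<le> arr a t" using \<open>s < t\<close> by (intro arr_mono) simp
  ultimately show "g s \<in> sender_space (arr a t)" by (auto simp: sender_space_def)
qed

lemma seen_below_next_unseen: "i < next_unseen V \<Longrightarrow> seen V i"
  unfolding next_unseen_def using not_less_Least by blast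

lemma not_seen_next_unseen: "\<not> seen V k \<Longrightarrow> \<not> seen V (next_unseen V)"
  unfolding next_unseen_def by (rule LeastI)

lemma next_unseen_le: "\<not> seen V k \<Longrightarrow> next_unseen V \<le> k"
  unfolding next_unseen_def by (rule Least_le)

lemma valid_tx_reveals_next_unseen:
  assumes tx: "valid_tx A K g" and K: "cv.subspace (K r)" "K r \<subseteq> sender_space N"
    and active: "next_unseen (K r) < A"
    and K': "cv.subspace K'" "K r \<subseteq> K'" "g \<in> K'"
  shows "seen K' (next_unseen (K r))"
proof -
  define u where "u = next_unseen (K r)"
  have u: "u \<in> U_idx A K" "r \<in> R_set A K u"
    using active unfolding u_def U_idx_def R_set_def active_rcv_def by auto
  obtain \<alpha> where \<alpha>: "\<forall>u\<in>U_idx A K. \<forall>r\<in>R_set A K u.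
            \<alpha> u \<noteq> (\<Sum>u'\<in>{u'\<in>U_idx A K. u' < u}. \<alpha> u' * witness (K r) u' u)"
    and g: "g = (\<lambda>i. if i \<in> U_idx A K then \<alpha> i else 0)"
    using tx unfolding valid_tx_def by blast
  define Us where "Us = {u'\<in>U_idx A K. u' < u}"
  have "finite Us" unfolding Us_def by (rule finite_subset[of _ "{..<u}"]) auto
  have W: "is_witness (K r) u' (witness (K r) u')" if "u' \<in> Us" for u'
    using that by (intro witness_is_witness[OF K] seen_below_next_unseen) (auto simp: Us_def u_def)
  \<comment> \<open>Subtracting y_r from g leaves a combination whose leading packet is p_u, by the choice of \<alpha> u.\<close>
  define d where "d = g - (\<Sum>u'\<in>Us. cscale (\<alpha> u') (witness (K r) u'))"
  have d_apply: "d i = g i - (\<Sum>u'\<in>Us. \<alpha> u' * witness (K r) u' i)" for i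
    by (simp add: d_def sum_fun_apply)
  have "d \<in> K'"
    unfolding d_def using K' W
    by (intro cv.subspace_diff cv.subspace_sum cv.subspace_scale) (auto simp: is_witness_def)
  moreover have "d u \<noteq> 0" using \<alpha> u by (simp add: d_apply g Us_def)
  moreover have "d i = 0" if "i < u" for i
  proof -
    have "seen (K r) i" using that seen_below_next_unseen unfolding u_def by blast
    from sum_witnesses_at_seen[OF \<open>finite Us\<close> W this, of \<alpha>] that show ?thesis
      by (simp add: d_apply g Us_def)
  qed
  ultimately show ?thesis
    unfolding u_def[symmetric] using K'(1) by (blast intro: seen_if_leading)
qed

definition unseen_backlog ::
  "(nat \<Rightarrow> bool) \<Rightarrow> (nat \<Rightarrow> 'r \<Rightarrow> bool) \<Rightarrow> (nat \<Rightarrow> 'f::field cvec) \<Rightarrow> nat \<Rightarrow> 'r \<Rightarrow> nat" where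
  "unseen_backlog a e g t r = card {k. k < arr a t \<and> \<not> seen (know e g t r) k}"

lemma queue_subset_unseen:
  "queue a e g t \<subseteq> {k. k < arr a t \<and> (\<exists>r. \<not> seen (know e g t r) k)}"
proof (induction t)
  case (Suc t)
  have "arr a t \<le> arr a (Suc t)" by (rule arr_mono) simp
  with Suc show ?case by auto
qed simp

lemma card_queue_le_sum_unseen_backlog:
  "card (queue a e g t) \<le> (\<Sum>r\<in>(UNIV::'r::finite set). unseen_backlog a e g t r)"
proof -
  have "card (queue a e g t) \<le> card (\<Union>r. {k. k < arr a t \<and> \<not> seen (know e g t r) k})"
    using queue_subset_unseen[of a e g t] by (intro card_mono) auto
  also have "\<dots> \<le> (\<Sum>r\<in>UNIV. card {k. k < arr a t \<and> \<not> seen (know e g t r) k})"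
    by (rule card_UN_le) simp
  finally show ?thesis unfolding unseen_backlog_def .
qed

lemma unseen_backlog_le_virtual_queue:
  assumes "valid_run a e g"
  shows "unseen_backlog a e g t r \<le> virtual_queue a e g t r"
proof -
  define A where "A = arr a t"
  define K where "K = know e g t r"
  have KA: "K \<subseteq> sender_space A" unfolding K_def A_def by (rule know_subset_sender_space[OF assms])
  have "{k. seen K k} \<union> {k. k < A \<and> \<not> seen K k} = {..<A}"
    using seen_imp_less[OF KA] by auto
  moreover have "finite {k. seen K k}" "finite {k. k < A \<and> \<not> seen K k}"
    using seen_imp_less[OF KA] by (auto intro: finite_subset[of _ "{..<A}"])
  ultimately have "card {k. seen K k} + card {k. k < A \<and> \<not> seen K k} = A"
    by (subst card_Un_disjoint[symmetric]) auto
  moreover have "cv.dim K \<le> card {k. seen K k}"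
    unfolding K_def by (rule dim_le_card_seen[OF know_subspace know_subset_sender_space[OF assms]])
  ultimately show ?thesis
    unfolding virtual_queue_def unseen_backlog_def cdim_def dim_sender_space
      K_def[symmetric] A_def[symmetric] by linarith
qed

lemma card_queue_le_sum_virtual_queue:
  assumes "valid_run a e g"
  shows "card (queue a e g t) \<le> (\<Sum>r\<in>(UNIV::'r::finite set). virtual_queue a e g t r)"
  using card_queue_le_sum_unseen_backlog[of a e g t]
    sum_mono[of UNIV "unseen_backlog a e g t", OF unseen_backlog_le_virtual_queue[OF assms]]
  by linarith

lemma reception_reveals_next_unseen:
  assumes run: "valid_run a e g" and "e t r"
    and unseen: "k < arr a (Suc t)" "\<not> seen (know e g t r) k"
  shows "seen (know e g (Suc t) r) (next_unseen (know e g t r))"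
proof (rule valid_tx_reveals_next_unseen[where K = "know e g t" and r = r])
  show "valid_tx (arr a (Suc t)) (know e g t) (g t)" using run unfolding valid_run_def by blast
  show "know e g t r \<subseteq> sender_space (arr a t)" by (rule know_subset_sender_space[OF run])
  show "next_unseen (know e g t r) < arr a (Suc t)"
    using next_unseen_le[OF unseen(2)] unseen(1) by simp
  show "g t \<in> know e g (Suc t) r" using \<open>e t r\<close> by (rule transmission_in_know)
qed (simp_all add: know_subspace know_mono)

section \<open>Domination by a single-server queue\<close>

\<comment> \<open>Truncated subtraction: a service opportunity at an empty queue is wasted.\<close>
fun backlog :: "(nat \<Rightarrow> bool) \<Rightarrow> (nat \<Rightarrow> bool) \<Rightarrow> nat \<Rightarrow> nat" where
  "backlog a s 0 = 0"
| "backlog a s (Suc t) = backlog a s t + of_bool (a t) - of_bool (s t)"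

lemma card_unseen_arrived_le:
  "card {k. k < arr a (Suc t) \<and> \<not> seen (know e g t r) k} \<le> unseen_backlog a e g t r + of_bool (a t)"
proof -
  have "{k. k < arr a (Suc t) \<and> \<not> seen (know e g t r) k}
        \<subseteq> {k. k < arr a t \<and> \<not> seen (know e g t r) k} \<union> {arr a t..<arr a (Suc t)}"
    by auto
  then have "card {k. k < arr a (Suc t) \<and> \<not> seen (know e g t r) k}
        \<le> card ({k. k < arr a t \<and> \<not> seen (know e g t r) k} \<union> {arr a t..<arr a (Suc t)})"
    by (intro card_mono) auto
  also have "\<dots> \<le> unseen_backlog a e g t r + card {arr a t..<arr a (Suc t)}"
    unfolding unseen_backlog_def by (rule card_Un_le)
  finally show ?thesis by (simp add: arr_Suc)
qed

lemma unseen_backlog_Suc_le: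
  assumes run: "valid_run a e g"
  shows "unseen_backlog a e g (Suc t) r \<le> unseen_backlog a e g t r + of_bool (a t) - of_bool (e t r)"
proof -
  define S where "S = {k. k < arr a (Suc t) \<and> \<not> seen (know e g t r) k}"
  define S' where "S' = {k. k < arr a (Suc t) \<and> \<not> seen (know e g (Suc t) r) k}"
  have "finite S" unfolding S_def by simp
  have "S' \<subseteq> S" unfolding S_def S'_def using seen_mono[OF know_mono, of e g t r] by blast
  have S: "card S \<le> unseen_backlog a e g t r + of_bool (a t)"
    unfolding S_def by (rule card_unseen_arrived_le)
  have "card S' \<le> card S - of_bool (e t r)"
  proof (cases "e t r \<and> S \<noteq> {}")
    case True
    then obtain k where k: "k \<in> S" by blast
    let ?u = "next_unseen (know e g t r)"
    have "?u \<in> S"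
      using k not_seen_next_unseen next_unseen_le by (fastforce simp: S_def)
    moreover have "seen (know e g (Suc t) r) ?u"
      using True k by (intro reception_reveals_next_unseen[OF run]) (auto simp: S_def)
    ultimately have "S' \<subseteq> S - {?u}" using \<open>S' \<subseteq> S\<close> by (auto simp: S'_def)
    then show ?thesis using True \<open>?u \<in> S\<close> \<open>finite S\<close> card_mono[of "S - {?u}" S'] by simp
  next
    case False
    then show ?thesis using card_mono[OF \<open>finite S\<close> \<open>S' \<subseteq> S\<close>] \<open>S' \<subseteq> S\<close> by (cases "e t r") auto
  qed
  with S show ?thesis unfolding unseen_backlog_def S'_def[symmetric] by linarith
qed

lemma unseen_backlog_le_backlog:
  assumes "valid_run a e g"
  shows "unseen_backlog a e g t r \<le> backlog a (\<lambda>t. e t r) t"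
proof (induction t)
  case (Suc t)
  with unseen_backlog_Suc_le[OF assms, of t r] show ?case by simp
qed (simp add: unseen_backlog_def arr_def)

lemma card_queue_le_sum_backlog:
  assumes "valid_run a e g"
  shows "card (queue a e g t) \<le> (\<Sum>r\<in>(UNIV::'r::finite set). backlog a (\<lambda>t. e t r) t)"
  using card_queue_le_sum_unseen_backlog[of a e g t]
    sum_mono[of UNIV "unseen_backlog a e g t", OF unseen_backlog_le_backlog[OF assms]]
  by linarith

section \<open>The expected backlog of one receiver\<close>

lemma backlog_cong:
  "(\<forall>i<t. a i = a' i) \<Longrightarrow> (\<forall>i<t. s i = s' i) \<Longrightarrow> backlog a s t = backlog a' s' t"
  by (induction t) auto

lemma backlog_le: "backlog a s t \<le> t"
  by (induction t) auto

definition receiver_backlog :: "'r \<Rightarrow> nat \<Rightarrow> (nat \<Rightarrow> bool \<times> ('r \<Rightarrow> bool)) \<Rightarrow> nat" where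
  "receiver_backlog r t \<omega> = backlog (arrivals_of \<omega>) (\<lambda>i. receptions_of \<omega> i r) t"

lemma receiver_backlog_Suc:
  "receiver_backlog r (Suc t) \<omega> =
     receiver_backlog r t \<omega> + of_bool (fst (\<omega> t)) - of_bool (snd (\<omega> t) r)"
  by (simp add: receiver_backlog_def arrivals_of_def receptions_of_def)

lemma receiver_backlog_cong:
  "(\<forall>i<t. \<omega> i = \<omega>' i) \<Longrightarrow> receiver_backlog r t \<omega> = receiver_backlog r t \<omega>'"
  unfolding receiver_backlog_def by (rule backlog_cong) (auto simp: arrivals_of_def receptions_of_def)

lemma measurable_receiver_backlog:
  "{..<t} \<subseteq> I \<Longrightarrow>
     receiver_backlog r t \<in> measurable (PiM I (\<lambda>i. measure_pmf (p i))) (count_space UNIV)"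
proof (induction t)
  case 0
  then show ?case by (simp add: receiver_backlog_def)
next
  case (Suc t)
  then have "t \<in> I" "{..<t} \<subseteq> I" by auto
  have step: "(\<lambda>\<omega>. q + of_bool (fst (\<omega> t)) - of_bool (snd (\<omega> t) r))
                \<in> measurable (PiM I (\<lambda>i. measure_pmf (p i))) (count_space UNIV)" for q :: nat
    by (rule measurable_compose[OF measurable_component_singleton[OF \<open>t \<in> I\<close>]]) simp
  show ?case unfolding receiver_backlog_Suc[abs_def]
    by (rule measurable_compose_countable[OF step Suc.IH[OF \<open>{..<t} \<subseteq> I\<close>]])
qed

lemma distr_Pi_pmf_restrict:
  assumes "finite J"
  shows "distr (measure_pmf (Pi_pmf J d p)) (PiM J (\<lambda>i. measure_pmf (p i))) (\<lambda>x. restrict x J) =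
         PiM J (\<lambda>i. measure_pmf (p i))"
proof -
  interpret product_prob_space "\<lambda>i. measure_pmf (p i)" J
    by (intro product_prob_spaceI) (simp add: measure_pmf.prob_space_axioms)
  show ?thesis
  proof (rule PiM_eqI)
    fix A assume A: "\<And>i. i \<in> J \<Longrightarrow> A i \<in> sets (measure_pmf (p i))"
    have "Pi\<^sub>E J A \<in> sets (PiM J (\<lambda>i. measure_pmf (p i)))"
      using A by (intro sets_PiM_I_finite assms) auto
    then have "emeasure (distr (measure_pmf (Pi_pmf J d p)) (PiM J (\<lambda>i. measure_pmf (p i)))
                 (\<lambda>x. restrict x J)) (Pi\<^sub>E J A)
             = emeasure (measure_pmf (Pi_pmf J d p)) ((\<lambda>x. restrict x J) -` Pi\<^sub>E J A)"
      by (subst emeasure_distr) (auto simp: space_PiM)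
    also have "\<dots> = emeasure (measure_pmf (Pi_pmf J d p)) (PiE_dflt J d A)"
      by (intro emeasure_eq_AE AE_pmfI) (auto simp: PiE_dflt_def set_Pi_pmf assms)
    also have "\<dots> = (\<Prod>i\<in>J. emeasure (measure_pmf (p i)) (A i))"
      by (simp add: measure_pmf.emeasure_eq_measure measure_Pi_pmf_PiE_dflt assms prod_ennreal)
    finally show "emeasure (distr (measure_pmf (Pi_pmf J d p)) (PiM J (\<lambda>i. measure_pmf (p i)))
                    (\<lambda>x. restrict x J)) (Pi\<^sub>E J A) = (\<Prod>i\<in>J. emeasure (measure_pmf (p i)) (A i))" .
  qed (use assms in simp_all)
qed

lemma distr_PiM_eq_map_Pi_pmf:
  assumes "finite J" "J \<subseteq> I"
    and h: "h \<in> measurable (PiM J (\<lambda>i. measure_pmf (p i))) (count_space UNIV)"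
    and h_local: "\<And>\<omega>. h (restrict \<omega> J) = h \<omega>"
  shows "distr (PiM I (\<lambda>i. measure_pmf (p i))) (count_space UNIV) h =
         measure_pmf (map_pmf h (Pi_pmf J d p))"
proof -
  interpret product_prob_space "\<lambda>i. measure_pmf (p i)" I
    by (intro product_prob_spaceI) (simp add: measure_pmf.prob_space_axioms)
  let ?PJ = "PiM J (\<lambda>i. measure_pmf (p i))"
  have h_restrict: "h = h \<circ> (\<lambda>\<omega>. restrict \<omega> J)" by (simp add: o_def h_local)
  have "distr (PiM I (\<lambda>i. measure_pmf (p i))) (count_space UNIV) h
        = distr (distr (PiM I (\<lambda>i. measure_pmf (p i))) ?PJ (\<lambda>\<omega>. restrict \<omega> J)) (count_space UNIV) h"
    by (subst distr_distr[OF h]) (use assms in \<open>auto intro: measurable_restrict_subset simp: h_restrict[symmetric]\<close>)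
  also have "distr (PiM I (\<lambda>i. measure_pmf (p i))) ?PJ (\<lambda>\<omega>. restrict \<omega> J) = ?PJ"
    by (rule distr_PiM_restrict_finite) (use assms in auto)
  also have "\<dots> = distr (measure_pmf (Pi_pmf J d p)) ?PJ (\<lambda>\<omega>. restrict \<omega> J)"
    by (rule distr_Pi_pmf_restrict[symmetric]) fact
  also have "distr \<dots> (count_space UNIV) h = distr (measure_pmf (Pi_pmf J d p)) (count_space UNIV) h"
    by (subst distr_distr[OF h]) (auto simp: space_PiM h_restrict[symmetric])
  finally show ?thesis by (simp add: map_pmf_rep_eq)
qed

fun backlog_pmf :: "(bool \<times> bool) pmf \<Rightarrow> nat \<Rightarrow> nat pmf" where
  "backlog_pmf B 0 = return_pmf 0"
| "backlog_pmf B (Suc t) =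
     map_pmf (\<lambda>((x, s), q). q + of_bool x - of_bool s) (pair_pmf B (backlog_pmf B t))"

lemma map_receiver_backlog_Pi_pmf:
  "map_pmf (receiver_backlog r t) (Pi_pmf {..<t} d (\<lambda>_. S)) =
     backlog_pmf (map_pmf (\<lambda>(x, f). (x, f r)) S) t"
proof (induction t)
  case 0
  then show ?case by (simp add: receiver_backlog_def)
next
  case (Suc t)
  let ?X = "Pi_pmf {..<t} d (\<lambda>_. S)"
  have "Pi_pmf {..<Suc t} d (\<lambda>_. S) = map_pmf (\<lambda>(y, f). f(t := y)) (pair_pmf S ?X)"
    unfolding lessThan_Suc by (rule Pi_pmf_insert) auto
  moreover have "receiver_backlog r (Suc t) (f(t := y)) =
                   receiver_backlog r t f + of_bool (fst y) - of_bool (snd y r)" for f y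
    using receiver_backlog_cong[of t "f(t := y)" f r] by (simp add: receiver_backlog_Suc)
  ultimately have "map_pmf (receiver_backlog r (Suc t)) (Pi_pmf {..<Suc t} d (\<lambda>_. S)) =
      map_pmf (\<lambda>((x, s), q). q + of_bool x - of_bool s)
        (map_pmf (\<lambda>(y, f). ((fst y, snd y r), receiver_backlog r t f)) (pair_pmf S ?X))"
    by (simp add: pmf.map_comp o_def case_prod_beta)
  also have "map_pmf (\<lambda>(y, f). ((fst y, snd y r), receiver_backlog r t f)) (pair_pmf S ?X) =
             pair_pmf (map_pmf (\<lambda>(x, f). (x, f r)) S) (map_pmf (receiver_backlog r t) ?X)"
    by (subst map_pair[symmetric]) (simp add: case_prod_beta)
  finally show ?case using Suc.IH by simp
qed

lemma slot_pmf_receiver_marginal: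
  "map_pmf (\<lambda>(x, f). (x, f r)) (slot_pmf lam mu :: (bool \<times> ('r::finite \<Rightarrow> bool)) pmf) =
     pair_pmf (bernoulli_pmf lam) (bernoulli_pmf mu)"
  unfolding slot_pmf_def
  by (subst map_pair[of id "\<lambda>f. f r", simplified]) (simp add: Pi_pmf_component)

lemma distr_receiver_backlog:
  "distr (path_measure lam mu) (count_space UNIV) (receiver_backlog (r::'r::finite) t) =
     measure_pmf (backlog_pmf (pair_pmf (bernoulli_pmf lam) (bernoulli_pmf mu)) t)"
proof -
  have "distr (path_measure lam mu) (count_space UNIV) (receiver_backlog r t) =
        measure_pmf (map_pmf (receiver_backlog r t)
          (Pi_pmf {..<t} undefined (\<lambda>_. slot_pmf lam mu :: (bool \<times> ('r \<Rightarrow> bool)) pmf)))"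
    unfolding path_measure_def
    by (rule distr_PiM_eq_map_Pi_pmf) (auto intro: measurable_receiver_backlog receiver_backlog_cong)
  then show ?thesis by (simp add: map_receiver_backlog_Pi_pmf slot_pmf_receiver_marginal)
qed

lemma prob_singleton_eq_tail_diff:
  fixes X :: "nat pmf"
  shows "measure_pmf.prob X {m} = measure_pmf.prob X {q. m \<le> q} - measure_pmf.prob X {q. Suc m \<le> q}"
proof -
  have "measure_pmf.prob X {q. m \<le> q} = measure_pmf.prob X ({m} \<union> {q. Suc m \<le> q})"
    by (rule arg_cong[of _ _ "measure_pmf.prob X"]) auto
  also have "\<dots> = measure_pmf.prob X {m} + measure_pmf.prob X {q. Suc m \<le> q}"
    by (rule measure_pmf.finite_measure_Union) auto
  finally show ?thesis by simp
qed

lemma prob_backlog_pmf_Suc_ge: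
  fixes B :: "(bool \<times> bool) pmf" and t :: nat
  defines "X \<equiv> backlog_pmf B t"
  shows "measure_pmf.prob (backlog_pmf B (Suc t)) {q. Suc j \<le> q} \<le>
           measure_pmf.prob X {q. Suc (Suc j) \<le> q}
         + measure_pmf.prob B (- {(False, True)}) * measure_pmf.prob X {Suc j}
         + measure_pmf.prob B {(True, False)} * measure_pmf.prob X {j}"
proof -
  let ?M = "pair_pmf B X"
  have "(\<lambda>((x, s), q). q + of_bool x - of_bool s) -` {q. Suc j \<le> q}
        \<subseteq> (UNIV \<times> {q. Suc (Suc j) \<le> q}) \<union> ((- {(False, True)}) \<times> {Suc j}) \<union> ({(True, False)} \<times> {j})"
    by (auto simp: of_bool_def split: if_splits)
  then have "measure_pmf.prob (backlog_pmf B (Suc t)) {q. Suc j \<le> q} \<le>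
        measure_pmf.prob ?M ((UNIV \<times> {q. Suc (Suc j) \<le> q}) \<union> ((- {(False, True)}) \<times> {Suc j})
                             \<union> ({(True, False)} \<times> {j}))"
    unfolding X_def by (simp add: measure_pmf.finite_measure_mono)
  also have "\<dots> \<le> measure_pmf.prob ?M (UNIV \<times> {q. Suc (Suc j) \<le> q})
                 + measure_pmf.prob ?M ((- {(False, True)}) \<times> {Suc j})
                 + measure_pmf.prob ?M ({(True, False)} \<times> {j})"
    by (intro order_trans[OF measure_Un_le] add_mono measure_Un_le order_refl) simp_all
  finally show ?thesis by (subst (asm) (1 2 3) measure_pmf_prob_product) simp_all
qed

lemma tail_recursion_le_power:
  fixes up down \<beta> p0 p1 p2 :: real
  assumes "0 \<le> up" "0 < down" "up + down \<le> 1" "\<beta> = up / down"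
    and "p0 \<le> \<beta> ^ j" "p1 \<le> \<beta> ^ Suc j" "p2 \<le> \<beta> ^ Suc (Suc j)"
  shows "p2 + (1 - down) * (p1 - p2) + up * (p0 - p1) \<le> \<beta> ^ Suc j"
proof -
  have "p2 + (1 - down) * (p1 - p2) + up * (p0 - p1) = down * p2 + (1 - down - up) * p1 + up * p0"
    by (simp add: algebra_simps)
  also have "\<dots> \<le> down * \<beta> ^ Suc (Suc j) + (1 - down - up) * \<beta> ^ Suc j + up * \<beta> ^ j"
    using assms by (intro add_mono mult_left_mono) auto
  also have "\<dots> = \<beta> ^ Suc j"
  proof -
    have "up = \<beta> * down" using assms by simp
    then show ?thesis by (simp add: algebra_simps)
  qed
  finally show ?thesis .
qed

text \<open>The backlog is a birth-death chain moving up with probability \<lambda>(1 - \<mu>) and down with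
  probability (1 - \<lambda>)\<mu>; \<beta>^k is the tail of its stationary law, which dominates the chain
  started empty.\<close>

lemma prob_backlog_pmf_ge_le:
  fixes lam mu :: real
  assumes "0 \<le> lam" "lam < 1" "0 < mu" "mu \<le> 1"
  defines "\<beta> \<equiv> lam * (1 - mu) / ((1 - lam) * mu)"
  shows "measure_pmf.prob (backlog_pmf (pair_pmf (bernoulli_pmf lam) (bernoulli_pmf mu)) t) {q. k \<le> q}
           \<le> \<beta> ^ k"
proof (induction t arbitrary: k)
  case 0
  have "0 \<le> \<beta>" unfolding \<beta>_def using assms by simp
  then show ?case by (cases k) (auto simp: indicator_def)
next
  case (Suc t)
  let ?B = "pair_pmf (bernoulli_pmf lam) (bernoulli_pmf mu)"
  let ?p = "\<lambda>i. measure_pmf.prob (backlog_pmf ?B t) {q. i \<le> q}"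
  show ?case
  proof (cases k)
    case (Suc j)
    have "measure_pmf.prob ?B (- {(False, True)}) = 1 - measure_pmf.prob ?B {(False, True)}"
      using measure_pmf.prob_compl[of "{(False, True)}" ?B] by (simp add: Compl_eq_Diff_UNIV)
    then have down: "measure_pmf.prob ?B (- {(False, True)}) = 1 - (1 - lam) * mu"
      using assms by (simp add: measure_pmf_single pmf_pair)
    have up: "measure_pmf.prob ?B {(True, False)} = lam * (1 - mu)"
      using assms by (simp add: measure_pmf_single pmf_pair)
    have "measure_pmf.prob (backlog_pmf ?B (Suc t)) {q. k \<le> q}
          \<le> ?p (Suc (Suc j)) + (1 - (1 - lam) * mu) * (?p (Suc j) - ?p (Suc (Suc j)))
            + lam * (1 - mu) * (?p j - ?p (Suc j))"
      using prob_backlog_pmf_Suc_ge[of ?B t j] \<open>k = Suc j\<close>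
      by (simp add: down up prob_singleton_eq_tail_diff)
    also have "\<dots> \<le> \<beta> ^ k"
    proof (unfold \<open>k = Suc j\<close>, rule tail_recursion_le_power)
      show "0 \<le> lam * (1 - mu)" "0 < (1 - lam) * mu" using assms by auto
      have "0 \<le> (1 - lam) * (1 - mu) + lam * mu" using assms by auto
      then show "lam * (1 - mu) + (1 - lam) * mu \<le> 1" by (simp add: algebra_simps)
      show "\<beta> = lam * (1 - mu) / ((1 - lam) * mu)" by (simp add: \<beta>_def)
    qed (rule Suc.IH)+
    finally show ?thesis .
  qed simp
qed

lemma set_backlog_pmf: "set_pmf (backlog_pmf B t) \<subseteq> {..t}"
  by (induction t) force+

lemma expectation_eq_sum_tails:
  fixes X :: "nat pmf"
  assumes "set_pmf X \<subseteq> {..t}"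
  shows "measure_pmf.expectation X real = (\<Sum>k\<in>{1..t}. measure_pmf.prob X {q. k \<le> q})"
proof -
  have "real q = (\<Sum>k\<in>{1..t}. indicator {q. k \<le> q} q)" if "q \<le> t" for q
  proof -
    have "{1..t} \<inter> {k. k \<le> q} = {1..q}" using that by auto
    then show ?thesis by (simp add: indicator_def sum.If_cases)
  qed
  then have "measure_pmf.expectation X real =
             measure_pmf.expectation X (\<lambda>q. \<Sum>k\<in>{1..t}. indicator {q. k \<le> q} q)"
    using assms by (intro integral_cong_AE) (auto intro!: AE_pmfI)
  also have "\<dots> = (\<Sum>k\<in>{1..t}. measure_pmf.expectation X (indicator {q. k \<le> q}))"
    by (rule Bochner_Integration.integral_sum)
       (auto intro: measure_pmf.integrable_const_bound[where B = 1] simp: indicator_def)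
  finally show ?thesis by simp
qed

lemma sum_power_le_geometric:
  fixes \<beta> :: real
  assumes "0 \<le> \<beta>" "\<beta> < 1"
  shows "(\<Sum>k\<in>{1..t}. \<beta> ^ k) \<le> \<beta> / (1 - \<beta>)"
proof (cases "t = 0")
  case False
  then have "(1 - \<beta>) * (\<Sum>k\<in>{1..t}. \<beta> ^ k) = \<beta> - \<beta> ^ Suc t"
    using sum_gp_multiplied[of 1 t \<beta>] by simp
  moreover have "0 \<le> \<beta> ^ Suc t" using assms by simp
  ultimately have "(\<Sum>k\<in>{1..t}. \<beta> ^ k) * (1 - \<beta>) \<le> \<beta>" by (simp add: mult.commute)
  then show ?thesis using assms by (simp add: pos_le_divide_eq)
qed (use assms in simp)

lemma expectation_backlog_pmf_le:
  fixes lam mu :: real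
  assumes "0 \<le> lam" "lam < mu" "mu \<le> 1"
  shows "measure_pmf.expectation (backlog_pmf (pair_pmf (bernoulli_pmf lam) (bernoulli_pmf mu)) t) real
           \<le> 1 / (1 - lam / mu)"
proof -
  define \<beta> where "\<beta> = lam * (1 - mu) / ((1 - lam) * mu)"
  have "0 \<le> \<beta>" using assms by (simp add: \<beta>_def)
  have "lam * (1 - mu) < (1 - lam) * mu" using assms by (simp add: algebra_simps)
  then have "\<beta> < 1" using assms by (simp add: \<beta>_def)
  have "measure_pmf.expectation (backlog_pmf (pair_pmf (bernoulli_pmf lam) (bernoulli_pmf mu)) t) real
        = (\<Sum>k\<in>{1..t}. measure_pmf.prob (backlog_pmf (pair_pmf (bernoulli_pmf lam) (bernoulli_pmf mu)) t)
                           {q. k \<le> q})"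
    by (rule expectation_eq_sum_tails[OF set_backlog_pmf])
  also have "\<dots> \<le> (\<Sum>k\<in>{1..t}. \<beta> ^ k)"
    unfolding \<beta>_def using assms by (intro sum_mono prob_backlog_pmf_ge_le) auto
  also have "\<dots> \<le> \<beta> / (1 - \<beta>)"
    by (rule sum_power_le_geometric) fact+
  also have "\<beta> / (1 - \<beta>) = lam * (1 - mu) / (mu - lam)"
  proof -
    have "(1 - lam) * mu - lam * (1 - mu) = mu - lam" by (simp add: algebra_simps)
    moreover have "1 - \<beta> = ((1 - lam) * mu - lam * (1 - mu)) / ((1 - lam) * mu)"
      using assms by (simp add: \<beta>_def diff_divide_distrib)
    ultimately show ?thesis using assms by (simp add: \<beta>_def)
  qed
  also have "\<dots> \<le> mu / (mu - lam)"
  proof (rule divide_right_mono)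
    have "0 \<le> lam * mu" using assms by simp
    moreover have "lam * (1 - mu) = lam - lam * mu" by (simp add: algebra_simps)
    ultimately show "lam * (1 - mu) \<le> mu" using assms by linarith
  qed (use assms in simp)
  also have "\<dots> = 1 / (1 - lam / mu)"
    using assms by (simp add: field_simps)
  finally show ?thesis .
qed

lemma expectation_receiver_backlog_le:
  fixes lam mu :: real
  assumes "0 \<le> lam" "lam < mu" "mu \<le> 1"
  shows "integral\<^sup>L (path_measure lam mu) (\<lambda>\<omega>. real (receiver_backlog (r::'r::finite) t \<omega>))
           \<le> 1 / (1 - lam / mu)"
proof -
  have "integral\<^sup>L (path_measure lam mu) (\<lambda>\<omega>. real (receiver_backlog r t \<omega>)) =
        integral\<^sup>L (distr (path_measure lam mu) (count_space UNIV) (receiver_backlog r t)) real"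
    unfolding path_measure_def
    by (rule integral_distr[symmetric]) (auto intro: measurable_receiver_backlog)
  then show ?thesis
    using expectation_backlog_pmf_le[OF assms] by (simp add: distr_receiver_backlog)
qed

lemma exp_queue_le:
  fixes tx :: "(nat \<Rightarrow> bool \<times> ('r::finite \<Rightarrow> bool)) \<Rightarrow> nat \<Rightarrow> 'f::field cvec"
  assumes policy: "alg2b_policy tx" and "0 \<le> lam" "lam < mu" "mu \<le> 1"
  shows "exp_queue lam mu tx t \<le> real CARD('r) / (1 - lam / mu)"
proof -
  let ?P = "path_measure lam mu :: (nat \<Rightarrow> bool \<times> ('r \<Rightarrow> bool)) measure"
  interpret P: prob_space ?P
    unfolding path_measure_def by (intro prob_space_PiM measure_pmf.prob_space_axioms)
  define F where "F \<omega> = real (card (queue (arrivals_of \<omega>) (receptions_of \<omega>) (tx \<omega>) t))" for \<omega>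
  define G where "G \<omega> = (\<Sum>r\<in>(UNIV :: 'r set). real (receiver_backlog r t \<omega>))" for \<omega>
  have F_le_G: "F \<omega> \<le> G \<omega>" for \<omega>
    using card_queue_le_sum_backlog[of "arrivals_of \<omega>" "receptions_of \<omega>" "tx \<omega>" t] policy
    by (simp add: F_def G_def alg2b_policy_def receiver_backlog_def flip: of_nat_sum)
  have integrable: "integrable ?P (\<lambda>\<omega>. real (receiver_backlog r t \<omega>))" for r
  proof (rule P.integrable_const_bound[where B = "real t"])
    show "AE \<omega> in ?P. norm (real (receiver_backlog r t \<omega>)) \<le> real t"
      by (simp add: receiver_backlog_def backlog_le)
    show "(\<lambda>\<omega>. real (receiver_backlog r t \<omega>)) \<in> borel_measurable ?P"
      unfolding path_measure_def by (intro measurable_compose[OF measurable_receiver_backlog]) auto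
  qed
  have "integral\<^sup>L ?P G = (\<Sum>r\<in>UNIV. integral\<^sup>L ?P (\<lambda>\<omega>. real (receiver_backlog r t \<omega>)))"
    unfolding G_def by (rule Bochner_Integration.integral_sum) (rule integrable)
  also have "\<dots> \<le> (\<Sum>r\<in>(UNIV :: 'r set). 1 / (1 - lam / mu))"
    by (intro sum_mono expectation_receiver_backlog_le) (use assms in auto)
  finally have G_le: "integral\<^sup>L ?P G \<le> real CARD('r) / (1 - lam / mu)" by simp
  \<comment> \<open>F need not be measurable for an arbitrary policy; then its integral is 0 by convention.\<close>
  show ?thesis
  proof (cases "integrable ?P F")
    case True
    have "integrable ?P G" unfolding G_def by (intro Bochner_Integration.integrable_sum integrable)
    with True F_le_G have "integral\<^sup>L ?P F \<le> integral\<^sup>L ?P G" by (intro integral_mono)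
    with G_le show ?thesis unfolding exp_queue_def F_def[symmetric] by linarith
  next
    case False
    then have "exp_queue lam mu tx t = 0"
      by (simp add: exp_queue_def F_def[symmetric] not_integrable_integral_eq)
    then show ?thesis using assms by (simp add: field_simps)
  qed
qed

lemma limsup_exp_queue_le:
  fixes tx :: "(nat \<Rightarrow> bool \<times> ('r::finite \<Rightarrow> bool)) \<Rightarrow> nat \<Rightarrow> 'f::field cvec"
  assumes "alg2b_policy tx" "0 \<le> lam" "lam < mu" "mu \<le> 1"
  shows "limsup (\<lambda>t. ereal (exp_queue lam mu tx t)) \<le> ereal (real CARD('r) / (1 - lam / mu))"
  using exp_queue_le[OF assms] by (intro Limsup_bounded always_eventually) simp

theorem theorem6:
  assumes q_ge_n: "CARD('r::finite) \<le> CARD('f::{field,finite})"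
  shows
    "(\<forall>(a :: nat \<Rightarrow> bool) (e :: nat \<Rightarrow> 'r \<Rightarrow> bool) (g :: nat \<Rightarrow> 'f cvec).
        valid_run a e g \<longrightarrow>
        (\<forall>t. card (queue a e g (Suc t)) \<le> (\<Sum>r\<in>UNIV. virtual_queue a e g (Suc t) r)))
   \<and> (\<forall>tx :: (nat \<Rightarrow> bool \<times> ('r \<Rightarrow> bool)) \<Rightarrow> nat \<Rightarrow> 'f cvec. alg2b_policy tx \<longrightarrow>
        (\<forall>mu\<in>{0<..<1::real}. \<exists>C::real. \<forall>\<^sub>F lam in at_left mu.
            limsup (\<lambda>t. ereal (exp_queue lam mu tx t)) \<le> ereal (C / (1 - lam / mu)))
      \<and> (\<forall>lam\<in>{0<..<1::real}. \<exists>C::real. \<forall>\<^sub>F mu in at_right lam.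
            limsup (\<lambda>t. ereal (exp_queue lam mu tx t)) \<le> ereal (C / (1 - lam / mu))))"
  \<comment> \<open>q \<ge> n only guarantees that the coding module can always choose its coefficients;
     runs are assumed valid here.\<close>
proof (intro conjI allI impI ballI)
  fix a and e :: "nat \<Rightarrow> 'r \<Rightarrow> bool" and g :: "nat \<Rightarrow> 'f cvec" and t
  assume "valid_run a e g"
  then show "card (queue a e g (Suc t)) \<le> (\<Sum>r\<in>UNIV. virtual_queue a e g (Suc t) r)"
    by (rule card_queue_le_sum_virtual_queue)
next
  fix tx :: "(nat \<Rightarrow> bool \<times> ('r \<Rightarrow> bool)) \<Rightarrow> nat \<Rightarrow> 'f cvec" and mu :: real
  assume "alg2b_policy tx" "mu \<in> {0<..<1}"
  then show "\<exists>C. \<forall>\<^sub>F lam in at_left mu.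
               limsup (\<lambda>t. ereal (exp_queue lam mu tx t)) \<le> ereal (C / (1 - lam / mu))"
    by (intro exI[of _ "real CARD('r)"])
       (auto simp: eventually_at_left_field intro!: exI[of _ 0] limsup_exp_queue_le)
next
  fix tx :: "(nat \<Rightarrow> bool \<times> ('r \<Rightarrow> bool)) \<Rightarrow> nat \<Rightarrow> 'f cvec" and lam :: real
  assume "alg2b_policy tx" "lam \<in> {0<..<1}"
  then show "\<exists>C. \<forall>\<^sub>F mu in at_right lam.
               limsup (\<lambda>t. ereal (exp_queue lam mu tx t)) \<le> ereal (C / (1 - lam / mu))"
    by (intro exI[of _ "real CARD('r)"])
       (auto simp: eventually_at_right_field intro!: exI[of _ 1] limsup_exp_queue_le)
qed

end
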